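(* Let $G$ be a simple graph with $m\ge 1$ edges and $\mathcal{H}$-eigenvalues $\lambda_1\ge\lambda_2\ge\cdots\ge\lambda_m$. Let $G'$ be an induced subgraph of $G$ with $m'\ge 1$ edges and $\mathcal{H}$-eigenvalues $\lambda_1'\ge\lambda_2'\ge\cdots\ge\lambda_{m'}'$. Then for every $1\le i\le m'$, $$\lambda_i\ge\lambda_i'+\kappa_{\min}(G')\quad\text{and}\quad \lambda_i'+\kappa_{\max}(G')\ge\lambda_{m-m'+i}.$$
   Context: For an oriented edge $e$ write $e^-$ for its tail and $e^+$ for its head. For distinct edges $e,e'$: $e\leftrightarrow e'$ means $e^+=e'^-$ or $e'^+=e^-$; $e\overset{\pm}{\sim}e'$ means $e^+=e'^+$ or $e^-=e'^-$; $e\vartriangle e'$ means $e,e'$ are two edges of a common triangle of the graph. $\triangle_G(e)$ is the number of triangles of $G$ containing $e$. The Helmholtzian matrix $\mathcal{H}(G)=(h_{ee'})$ is indexed by the edges, with $h_{ee}=\triangle_G(e)+2$, and for $e\ne e'$: $h_{ee'}=-1$ if $e\leftrightarrow e'$ and not $e\vartriangle e'$; $h_{ee'}=1$ if $e\overset{\pm}{\sim}e'$ and not $e\vartriangle e'$; $h_{ee'}=0$ otherwise. The $\mathcal{H}$-eigenvalues of a graph are the eigenvalues of its Helmholtzian matrix for an arbitrary edge orientation (they do not depend on the orientation). For an induced subgraph $G'$ of $G$ and $e\in E(G')$, $\kappa_{G'}(e)=\triangle_G(e)-\triangle_{G'}(e)$, $\kappa_{\min}(G')=\min_{e\in E(G')}\kappa_{G'}(e)$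 and $\kappa_{\max}(G')=\max_{e\in E(G')}\kappa_{G'}(e)$. *)

theory Defs
  imports "Jordan_Normal_Form.Char_Poly" "HOL-Computational_Algebra.Polynomial"
begin

definition simple_graph :: "'a set \<Rightarrow> 'a set set \<Rightarrow> bool" where
  "simple_graph V E \<longleftrightarrow> finite V \<and> (\<forall>e\<in>E. e \<subseteq> V \<and> card e = 2)"

definition induced_edges :: "'a set set \<Rightarrow> 'a set \<Rightarrow> 'a set set" where
  "induced_edges E W = {e \<in> E. e \<subseteq> W}"

text \<open>An orientation assigns to each edge its tail; the head is the other endpoint.\<close>
definition orientation :: "'a set set \<Rightarrow> ('a set \<Rightarrow> 'a) \<Rightarrow> bool" where
  "orientation E ori \<longleftrightarrow> (\<forall>e\<in>E. ori e \<in> e)"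

definition etail :: "('a set \<Rightarrow> 'a) \<Rightarrow> 'a set \<Rightarrow> 'a" where
  "etail ori e = ori e"

definition ehead :: "('a set \<Rightarrow> 'a) \<Rightarrow> 'a set \<Rightarrow> 'a" where
  "ehead ori e = (THE v. v \<in> e \<and> v \<noteq> ori e)"

definition ntri :: "'a set set \<Rightarrow> 'a set \<Rightarrow> nat" where
  "ntri E e = card {w. w \<notin> e \<and> (\<forall>u\<in>e. {u, w} \<in> E)}"

definition in_common_tri :: "'a set set \<Rightarrow> 'a set \<Rightarrow> 'a set \<Rightarrow> bool" where
  "in_common_tri E e e' \<longleftrightarrow> e \<noteq> e' \<and> e \<in> E \<and> e' \<in> E \<and>
     (\<exists>a b c. a \<noteq> b \<and> b \<noteq> c \<and> a \<noteq> c \<and> {a,b} \<in> E \<and> {b,c} \<in> E \<and> {a,c} \<in> E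
        \<and> e \<subseteq> {a,b,c} \<and> e' \<subseteq> {a,b,c})"

definition head_tail_adj :: "('a set \<Rightarrow> 'a) \<Rightarrow> 'a set \<Rightarrow> 'a set \<Rightarrow> bool" where
  "head_tail_adj ori e e' \<longleftrightarrow> ehead ori e = etail ori e' \<or> ehead ori e' = etail ori e"

definition same_end_adj :: "('a set \<Rightarrow> 'a) \<Rightarrow> 'a set \<Rightarrow> 'a set \<Rightarrow> bool" where
  "same_end_adj ori e e' \<longleftrightarrow> ehead ori e = ehead ori e' \<or> etail ori e = etail ori e'"

definition helm_entry :: "'a set set \<Rightarrow> ('a set \<Rightarrow> 'a) \<Rightarrow> 'a set \<Rightarrow> 'a set \<Rightarrow> real" where
  "helm_entry E ori e e' =
    (if e = e' then real (ntri E e) + 2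
     else if head_tail_adj ori e e' \<and> \<not> in_common_tri E e e' then -1
     else if same_end_adj ori e e' \<and> \<not> in_common_tri E e e' then 1
     else 0)"

definition edge_list :: "'a set set \<Rightarrow> 'a set list" where
  "edge_list E = (SOME xs. set xs = E \<and> distinct xs)"

definition helmholtzian :: "'a set set \<Rightarrow> ('a set \<Rightarrow> 'a) \<Rightarrow> real mat" where
  "helmholtzian E ori =
    (let es = edge_list E
     in mat (length es) (length es) (\<lambda>(i, j). helm_entry E ori (es ! i) (es ! j)))"

text \<open>The i-th largest H-eigenvalue (1-indexed), eigenvalues counted with
  algebraic multiplicity as roots of the characteristic polynomial.\<close>
definition H_eig :: "'a set set \<Rightarrow> ('a set \<Rightarrow> 'a) \<Rightarrow> nat \<Rightarrow> real" where
  "H_eig E ori i = rev (sorted_list_of_multiset (proots (char_poly (helmholtzian E ori)))) ! (i - 1)"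

definition kappa :: "'a set set \<Rightarrow> 'a set set \<Rightarrow> 'a set \<Rightarrow> real" where
  "kappa E E' e = real (ntri E e) - real (ntri E' e)"

definition kappa_min :: "'a set set \<Rightarrow> 'a set set \<Rightarrow> real" where
  "kappa_min E E' = Min (kappa E E' ` E')"

definition kappa_max :: "'a set set \<Rightarrow> 'a set set \<Rightarrow> real" where
  "kappa_max E E' = Max (kappa E E' ` E')"

end

(*
  Let J be the m \<times> m' matrix whose a-th column is \<plusminus> the unit vector of the a-th edge of G'
  inside G, with sign -1 exactly where the two orientations disagree; J is an isometry.
  Then J^T H(G) J = H(G') + diag \<kappa>: every triangle of G containing two edges of G' lies in G',
  reorienting an edge multiplies its row and column by -1, and the diagonal entries differ by
  the number of triangles lost.  So on the range of J the quadratic form of H(G) lies between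
  those of H(G') + \<kappa>_min and H(G') + \<kappa>_max, and the Courant-Fischer principle, applied to
  the images under J of the spans of the top i and of the bottom m' - i + 1 eigenvectors of
  H(G'), gives the two inequalities.
*)
theory Submission
  imports Defs "Jordan_Normal_Form.Spectral_Radius" "Jordan_Normal_Form.DL_Missing_List"
begin

section \<open>Isometries and congruences\<close>

definition isometry_mat :: "nat \<Rightarrow> nat \<Rightarrow> real mat \<Rightarrow> bool" where
  "isometry_mat n k F \<longleftrightarrow> F \<in> carrier_mat n k \<and> F\<^sup>T * F = 1\<^sub>m k"

definition signed_selection_mat :: "nat \<Rightarrow> nat \<Rightarrow> (nat \<Rightarrow> nat) \<Rightarrow> (nat \<Rightarrow> real) \<Rightarrow> real mat" where
  "signed_selection_mat n k \<sigma> s = mat n k (\<lambda>(i, j). if i = \<sigma> j then s j else 0)"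

lemma signed_selection_mat_carrier [simp]: "signed_selection_mat n k \<sigma> s \<in> carrier_mat n k"
  and signed_selection_mat_dim [simp]:
    "dim_row (signed_selection_mat n k \<sigma> s) = n" "dim_col (signed_selection_mat n k \<sigma> s) = k"
  unfolding signed_selection_mat_def by simp_all

lemma signed_selection_mat_congruence:
  fixes A :: "real mat" and s :: "nat \<Rightarrow> real"
  assumes A: "A \<in> carrier_mat n n" and \<sigma>: "\<sigma> ` {..<k} \<subseteq> {..<n}" and a: "a < k" and b: "b < k"
  defines "S \<equiv> signed_selection_mat n k \<sigma> s"
  shows "(S\<^sup>T * A * S) $$ (a, b) = s a * s b * A $$ (\<sigma> a, \<sigma> b)"
proof -
  have \<sigma>a: "\<sigma> a < n" and \<sigma>b: "\<sigma> b < n" using \<sigma> a b by auto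
  have row: "(S\<^sup>T * A) $$ (a, j) = s a * A $$ (\<sigma> a, j)" if "j < n" for j
    using that a A \<sigma>a
    by (simp add: S_def signed_selection_mat_def scalar_prod_def if_distrib[of "\<lambda>x. x * _"] cong: if_cong)
  have "(S\<^sup>T * A * S) $$ (a, b)
      = (\<Sum>j = 0..<n. (S\<^sup>T * A) $$ (a, j) * (if j = \<sigma> b then s b else 0))"
    using a b A by (simp add: S_def signed_selection_mat_def scalar_prod_def)
  also have "\<dots> = s a * A $$ (\<sigma> a, \<sigma> b) * s b"
    using \<sigma>b row by (simp add: if_distrib[of "\<lambda>x. _ * x"] cong: if_cong)
  finally show ?thesis by simp
qed

lemma isometry_mat_signed_selection:
  assumes "inj_on \<sigma> {..<k}" "\<sigma> ` {..<k} \<subseteq> {..<n}" "\<And>j. j < k \<Longrightarrow> s j * s j = 1"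
  shows "isometry_mat n k (signed_selection_mat n k \<sigma> s)"
proof -
  let ?S = "signed_selection_mat n k \<sigma> s"
  have "?S\<^sup>T * ?S = ?S\<^sup>T * 1\<^sub>m n * ?S"
    using right_mult_one_mat[of "?S\<^sup>T" k n] by simp
  also have "\<dots> = 1\<^sub>m k"
    using signed_selection_mat_congruence[OF one_carrier_mat assms(2)] assms(1,2,3)
    by (intro eq_matI) (auto simp: inj_on_def subset_eq)
  finally show ?thesis unfolding isometry_mat_def by simp
qed

lemma isometry_mat_mult:
  assumes "isometry_mat n m J" "isometry_mat m r F"
  shows "isometry_mat n r (J * F)"
proof -
  have J: "J \<in> carrier_mat n m" and F: "F \<in> carrier_mat m r"
    and "J\<^sup>T * J = 1\<^sub>m m" "F\<^sup>T * F = 1\<^sub>m r" using assms unfolding isometry_mat_def by auto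
  moreover have "(J * F)\<^sup>T * (J * F) = F\<^sup>T * ((J\<^sup>T * J) * F)"
    using J F by (simp add: transpose_mult assoc_mult_mat[of _ r m _ n _ r])
  ultimately show ?thesis unfolding isometry_mat_def using F by auto
qed

lemma isometry_mat_square_right_inverse:
  assumes "isometry_mat n n U" shows "U * U\<^sup>T = 1\<^sub>m n"
  using assms mat_mult_left_right_inverse[of "U\<^sup>T" n U] unfolding isometry_mat_def by auto

lemma congruence_mult:
  fixes A F G :: "'a :: comm_semiring_0 mat"
  assumes "A \<in> carrier_mat n n" "F \<in> carrier_mat n m" "G \<in> carrier_mat m r"
  shows "(F * G)\<^sup>T * A * (F * G) = G\<^sup>T * (F\<^sup>T * A * F) * G"
proof -
  have A: "A \<in> carrier_mat n n" and F: "F \<in> carrier_mat n m" and G: "G \<in> carrier_mat m r"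
    using assms by auto
  have Ft: "F\<^sup>T \<in> carrier_mat m n" and Gt: "G\<^sup>T \<in> carrier_mat r m" and FtA: "F\<^sup>T * A \<in> carrier_mat m n"
    and FG: "F * G \<in> carrier_mat n r" and FtAF: "F\<^sup>T * A * F \<in> carrier_mat m m"
    using assms by auto
  have "(F * G)\<^sup>T * A * (F * G) = G\<^sup>T * F\<^sup>T * A * (F * G)" by (simp only: transpose_mult[OF F G])
  also have "\<dots> = G\<^sup>T * ((F\<^sup>T * A) * (F * G))"
    by (simp only: assoc_mult_mat[OF Gt Ft A] assoc_mult_mat[OF Gt FtA FG])
  also have "(F\<^sup>T * A) * (F * G) = (F\<^sup>T * A * F) * G" by (simp only: assoc_mult_mat[OF FtA F G])
  also have "G\<^sup>T * \<dots> = G\<^sup>T * (F\<^sup>T * A * F) * G" by (simp only: assoc_mult_mat[OF Gt FtAF G])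
  finally show ?thesis .
qed

lemma symmetric_congruence:
  fixes A F :: "'a :: comm_semiring_0 mat"
  assumes A: "A \<in> carrier_mat n n" "A\<^sup>T = A" and F: "F \<in> carrier_mat n k"
  shows "(F\<^sup>T * A * F)\<^sup>T = F\<^sup>T * A * F"
proof -
  have FtA: "F\<^sup>T * A \<in> carrier_mat k n" using A F by simp
  have "(F\<^sup>T * A * F)\<^sup>T = F\<^sup>T * (A\<^sup>T * F)"
    using transpose_mult[OF FtA F] transpose_mult[of "F\<^sup>T" k n A n] A F by simp
  then show ?thesis using A F by simp
qed

lemma congruence_mat_index:
  fixes A F :: "'a :: comm_semiring_0 mat"
  assumes "F \<in> carrier_mat n k" "A \<in> carrier_mat n n" "i < k" "j < k"
  shows "(F\<^sup>T * A * F) $$ (i, j) = col F i \<bullet> (A *\<^sub>v col F j)"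
  using assms by (simp add: col_mult2[of A n n F k j] mult_mat_vec_def)

lemma quadratic_form_congruence:
  fixes A F :: "'a :: comm_semiring_0 mat"
  assumes F: "F \<in> carrier_mat n k" and A: "A \<in> carrier_mat n n" and a: "a \<in> carrier_vec k"
  shows "(F *\<^sub>v a) \<bullet> (A *\<^sub>v (F *\<^sub>v a)) = a \<bullet> ((F\<^sup>T * A * F) *\<^sub>v a)"
proof -
  have "(F *\<^sub>v a) \<bullet> (A *\<^sub>v (F *\<^sub>v a)) = (F\<^sup>T *\<^sub>v (A *\<^sub>v (F *\<^sub>v a))) \<bullet> a"
    using F A a by (simp add: comm_scalar_prod[of "F *\<^sub>v a" n] transpose_vec_mult_scalar[OF F a])
  also have "F\<^sup>T *\<^sub>v (A *\<^sub>v (F *\<^sub>v a)) = (F\<^sup>T * A * F) *\<^sub>v a"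
    using F A a by (simp add: assoc_mult_mat_vec[of "F\<^sup>T" k n "A * F" k a]
        assoc_mult_mat_vec[of A n n F k a])
  also have "\<dots> \<bullet> a = a \<bullet> ((F\<^sup>T * A * F) *\<^sub>v a)"
  proof (rule comm_scalar_prod[OF _ a])
    show "(F\<^sup>T * A * F) *\<^sub>v a \<in> carrier_vec k"
      using F A by (intro mult_mat_vec_carrier[OF _ a]) auto
  qed
  finally show ?thesis .
qed

lemma isometry_mat_scalar_prod_self:
  assumes "isometry_mat n k F" "a \<in> carrier_vec k"
  shows "(F *\<^sub>v a) \<bullet> (F *\<^sub>v a) = a \<bullet> a"
  using quadratic_form_congruence[of F n k "1\<^sub>m n" a] mult_mat_vec_carrier[of F n k a] assms
  unfolding isometry_mat_def by (simp add: right_mult_one_mat[of "F\<^sup>T" k n])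

lemma real_scalar_prod_self_nonneg: "0 \<le> (v :: real vec) \<bullet> v"
  using conjugate_square_ge_0_vec[of v] by simp

lemma real_scalar_prod_self_pos_iff:
  "(v :: real vec) \<in> carrier_vec n \<Longrightarrow> 0 < v \<bullet> v \<longleftrightarrow> v \<noteq> 0\<^sub>v n"
  using conjugate_square_greater_0_vec[of v n] by simp

lemma scalar_prod_self_sum:
  fixes a :: "'a :: comm_semiring_1 vec"
  assumes "a \<in> carrier_vec n" shows "a \<bullet> a = (\<Sum>i<n. (a $ i)\<^sup>2)"
  using assms by (simp add: scalar_prod_def power2_eq_square lessThan_atLeast0)

lemma mat_diag_dims [simp]: "dim_row (mat_diag n d) = n" "dim_col (mat_diag n d) = n"
  by (simp_all add: mat_diag_def)

lemma quadratic_form_mat_diag: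
  fixes a :: "'a :: comm_semiring_1 vec"
  assumes "a \<in> carrier_vec n" shows "a \<bullet> (mat_diag n d *\<^sub>v a) = (\<Sum>i<n. d i * (a $ i)\<^sup>2)"
  using assms by (simp add: mat_diag_def scalar_prod_def power2_eq_square lessThan_atLeast0
      if_distrib[of "\<lambda>x. x * _"] cong: if_cong) (auto intro!: sum.cong simp: ac_simps)

section \<open>Spectral theorem for real symmetric matrices\<close>

lemma quadratic_form_mat_diag_lower_bound:
  fixes a :: "real vec"
  assumes "a \<in> carrier_vec n" "\<And>i. i < n \<Longrightarrow> c \<le> d i"
  shows "c * (a \<bullet> a) \<le> a \<bullet> (mat_diag n d *\<^sub>v a)"
  unfolding quadratic_form_mat_diag[OF assms(1)] scalar_prod_self_sum[OF assms(1)] sum_distrib_left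
  using assms(2) by (intro sum_mono mult_right_mono) auto

lemma quadratic_form_mat_diag_upper_bound:
  fixes a :: "real vec"
  assumes "a \<in> carrier_vec n" "\<And>i. i < n \<Longrightarrow> d i \<le> c"
  shows "a \<bullet> (mat_diag n d *\<^sub>v a) \<le> c * (a \<bullet> a)"
  unfolding quadratic_form_mat_diag[OF assms(1)] scalar_prod_self_sum[OF assms(1)] sum_distrib_left
  using assms(2) by (intro sum_mono mult_right_mono) auto

lemma symmetric_mat_scalar_prod:
  fixes A :: "'a :: comm_semiring_0 mat"
  assumes A: "A \<in> carrier_mat n n" "A\<^sup>T = A" and x: "x \<in> carrier_vec n" and y: "y \<in> carrier_vec n"
  shows "x \<bullet> (A *\<^sub>v y) = (A *\<^sub>v x) \<bullet> y"
  using transpose_vec_mult_scalar[OF A(1) y x] comm_scalar_prod[OF x mult_mat_vec_carrier[OF A(1) y]] A(2)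
  by simp

(* x + iy is a complex eigenvector of A for the eigenvalue \<alpha> + i\<beta>. *)
lemma real_symmetric_mat_rotation_vanishes:
  fixes A :: "real mat"
  assumes A: "A \<in> carrier_mat n n" "A\<^sup>T = A" and x: "x \<in> carrier_vec n" and y: "y \<in> carrier_vec n"
    and Ax: "A *\<^sub>v x = \<alpha> \<cdot>\<^sub>v x - \<beta> \<cdot>\<^sub>v y" and Ay: "A *\<^sub>v y = \<beta> \<cdot>\<^sub>v x + \<alpha> \<cdot>\<^sub>v y"
  shows "\<beta> * (x \<bullet> x + y \<bullet> y) = 0"
proof -
  have "y \<bullet> (A *\<^sub>v x) = \<alpha> * (y \<bullet> x) - \<beta> * (y \<bullet> y)"
    unfolding Ax using x y by (simp add: scalar_prod_minus_distrib[of _ n])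
  moreover have "(A *\<^sub>v y) \<bullet> x = \<beta> * (x \<bullet> x) + \<alpha> * (y \<bullet> x)"
    unfolding Ay using x y by (simp add: add_scalar_prod_distrib[of _ n])
  ultimately show ?thesis
    using symmetric_mat_scalar_prod[OF A y x] by (simp add: algebra_simps)
qed

lemma complex_eigenvector_real_parts:
  fixes A :: "real mat"
  assumes A: "A \<in> carrier_mat n n" and z: "z \<in> carrier_vec n"
    and eigen: "map_mat complex_of_real A *\<^sub>v z = a \<cdot>\<^sub>v z"
  shows "A *\<^sub>v map_vec Re z = Re a \<cdot>\<^sub>v map_vec Re z - Im a \<cdot>\<^sub>v map_vec Im z"
    and "A *\<^sub>v map_vec Im z = Im a \<cdot>\<^sub>v map_vec Re z + Re a \<cdot>\<^sub>v map_vec Im z"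
proof -
  have row: "(\<Sum>j<n. complex_of_real (A $$ (i, j)) * z $ j) = a * z $ i" if "i < n" for i
    using arg_cong[OF eigen, of "\<lambda>v. v $ i"] that A z by (simp add: scalar_prod_def lessThan_atLeast0)
  show "A *\<^sub>v map_vec Re z = Re a \<cdot>\<^sub>v map_vec Re z - Im a \<cdot>\<^sub>v map_vec Im z"
    using A z arg_cong[where f = Re, OF row]
    by (intro eq_vecI) (auto simp: scalar_prod_def lessThan_atLeast0)
  show "A *\<^sub>v map_vec Im z = Im a \<cdot>\<^sub>v map_vec Re z + Re a \<cdot>\<^sub>v map_vec Im z"
    using A z arg_cong[where f = Im, OF row]
    by (intro eq_vecI) (auto simp: scalar_prod_def lessThan_atLeast0)
qed

lemma real_symmetric_mat_eigenvector:
  fixes A :: "real mat"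
  assumes A: "A \<in> carrier_mat n n" "A\<^sup>T = A" and n: "n > 0"
  obtains e v where "v \<in> carrier_vec n" "v \<noteq> 0\<^sub>v n" "A *\<^sub>v v = e \<cdot>\<^sub>v v"
proof -
  have Ac: "map_mat complex_of_real A \<in> carrier_mat n n" using A by simp
  obtain a where "eigenvalue (map_mat complex_of_real A) a"
    using spectrum_non_empty[OF Ac n] unfolding spectrum_def by auto
  then obtain z where z: "z \<in> carrier_vec n" "z \<noteq> 0\<^sub>v n" "map_mat complex_of_real A *\<^sub>v z = a \<cdot>\<^sub>v z"
    unfolding eigenvalue_def eigenvector_def using Ac by auto
  define x where "x = map_vec Re z"
  define y where "y = map_vec Im z"
  have x: "x \<in> carrier_vec n" and y: "y \<in> carrier_vec n" using z(1) by (auto simp: x_def y_def)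
  note Axy = complex_eigenvector_real_parts[OF A(1) z(1,3), folded x_def y_def]
  have "x \<noteq> 0\<^sub>v n \<or> y \<noteq> 0\<^sub>v n"
  proof (rule ccontr)
    assume "\<not> ?thesis"
    then have "x $ i = 0" "y $ i = 0" if "i < n" for i
      using that by auto
    then have "z $ i = 0" if "i < n" for i
      using that z(1) by (auto simp: x_def y_def complex_eq_iff)
    then show False using z(1,2) by (auto intro: eq_vecI)
  qed
  then have "x \<bullet> x + y \<bullet> y > 0"
    using x y real_scalar_prod_self_pos_iff real_scalar_prod_self_nonneg
    by (metis add_nonneg_pos add_pos_nonneg)
  then have "Im a = 0" using real_symmetric_mat_rotation_vanishes[OF A x y Axy] by simp
  moreover have "0 \<cdot>\<^sub>v v = 0\<^sub>v n" if "v \<in> carrier_vec n" for v :: "real vec"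
    using that by (intro eq_vecI) auto
  ultimately show thesis
    using that x y Axy \<open>x \<noteq> 0\<^sub>v n \<or> y \<noteq> 0\<^sub>v n\<close> by auto
qed

lemma unit_vec_orthonormal_completion:
  fixes v :: "real vec"
  assumes v: "v \<in> carrier_vec n" and v1: "v \<bullet> v = 1"
  obtains W where "isometry_mat n n W" "col W 0 = v"
proof -
  interpret cof_vec_space n "TYPE(real)" .
  have v0: "v \<noteq> 0\<^sub>v n" using v1 by auto
  define b where "b = basis_completion v"
  note bc = basis_completion[OF v v0, folded b_def]
  define gs where "gs = gram_schmidt n b"
  note gr = gram_schmidt_result[OF bc(2) bc(4) bc(5) gs_def]
  have n0: "n \<noteq> 0" using v v0 by (auto intro: eq_vecI)
  obtain vs where "b = v # vs" using bc(6,7) n0 by (cases b) auto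
  then have hd_gs: "hd gs = v" unfolding gs_def using gram_schmidt_hd[OF v] by simp
  have len_gs: "length gs = n" using gr(4) bc(6) by simp
  have gs: "gs ! i \<in> carrier_vec n" if "i < n" for i using gr(3) len_gs that by auto
  have orth: "gs ! i \<bullet> gs ! j = 0 \<longleftrightarrow> i \<noteq> j" if "i < n" "j < n" for i j
    using gr(2) len_gs that unfolding corthogonal_def by auto
  define ws where "ws = map (\<lambda>w. (1 / sqrt (w \<bullet> w)) \<cdot>\<^sub>v w) gs"
  have ws: "ws ! i \<in> carrier_vec n" if "i < n" for i using gs that len_gs by (simp add: ws_def)
  have ws_orthonormal: "ws ! i \<bullet> ws ! j = (if i = j then 1 else 0)" if "i < n" "j < n" for i j
  proof -
    have "ws ! i \<bullet> ws ! j = (gs ! i \<bullet> gs ! j) / (sqrt (gs ! i \<bullet> gs ! i) * sqrt (gs ! j \<bullet> gs ! j))"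
      using that gs len_gs
      by (simp add: ws_def smult_scalar_prod_distrib[of _ n] scalar_prod_smult_distrib[of _ n])
    moreover have "0 < gs ! i \<bullet> gs ! i"
      using orth[of i i] real_scalar_prod_self_nonneg[of "gs ! i"] that by simp
    ultimately show ?thesis using orth[OF that] by auto
  qed
  define W where "W = mat_of_cols n ws"
  have W: "W \<in> carrier_mat n n" using len_gs mat_of_cols_carrier(1)[of n ws] by (simp add: W_def ws_def)
  have col_W: "col W j = ws ! j" if "j < n" for j using that ws len_gs by (simp add: W_def ws_def)
  have "W\<^sup>T * W = 1\<^sub>m n" using W by (intro eq_matI) (auto simp: col_W ws_orthonormal)
  moreover have "col W 0 = v"
    using n0 hd_gs len_gs v1 col_W[of 0] by (cases gs) (auto simp: ws_def)
  ultimately show thesis using that W unfolding isometry_mat_def by blast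
qed

lemma four_block_diag_congruence:
  fixes E A3 U3 :: "'a :: comm_semiring_1 mat"
  assumes E: "E \<in> carrier_mat 1 1" and A3: "A3 \<in> carrier_mat k k" and U3: "U3 \<in> carrier_mat k k"
  defines "Y \<equiv> four_block_mat (1\<^sub>m 1) (0\<^sub>m 1 k) (0\<^sub>m k 1) U3"
  shows "Y\<^sup>T * four_block_mat E (0\<^sub>m 1 k) (0\<^sub>m k 1) A3 * Y
    = four_block_mat E (0\<^sub>m 1 k) (0\<^sub>m k 1) (U3\<^sup>T * A3 * U3)"
proof -
  have U3t: "U3\<^sup>T \<in> carrier_mat k k" using U3 by simp
  have "Y\<^sup>T = four_block_mat (1\<^sub>m 1) (0\<^sub>m 1 k) (0\<^sub>m k 1) U3\<^sup>T"
    unfolding Y_def using U3 by (simp add: transpose_four_block_mat[of _ 1 1 _ k _ k])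
  moreover have "four_block_mat (1\<^sub>m 1) (0\<^sub>m 1 k) (0\<^sub>m k 1) U3\<^sup>T
      * four_block_mat E (0\<^sub>m 1 k) (0\<^sub>m k 1) A3
      = four_block_mat E (0\<^sub>m 1 k) (0\<^sub>m k 1) (U3\<^sup>T * A3)"
    by (subst mult_four_block_mat[OF one_carrier_mat zero_carrier_mat zero_carrier_mat U3t
          E zero_carrier_mat zero_carrier_mat A3]) (use E A3 U3t in simp)
  moreover have "four_block_mat E (0\<^sub>m 1 k) (0\<^sub>m k 1) (U3\<^sup>T * A3) * Y
      = four_block_mat E (0\<^sub>m 1 k) (0\<^sub>m k 1) (U3\<^sup>T * A3 * U3)"
    unfolding Y_def
    by (subst mult_four_block_mat[OF E zero_carrier_mat zero_carrier_mat mult_carrier_mat[OF U3t A3]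
          one_carrier_mat zero_carrier_mat zero_carrier_mat U3]) (use E A3 U3t U3 in simp)
  ultimately show ?thesis by simp
qed

lemma real_symmetric_mat_unit_eigenvector:
  fixes A :: "real mat"
  assumes A: "A \<in> carrier_mat n n" "A\<^sup>T = A" and n: "n > 0"
  obtains e v where "v \<in> carrier_vec n" "v \<bullet> v = 1" "A *\<^sub>v v = e \<cdot>\<^sub>v v"
proof -
  obtain e v where v: "v \<in> carrier_vec n" "v \<noteq> 0\<^sub>v n" "A *\<^sub>v v = e \<cdot>\<^sub>v v"
    using real_symmetric_mat_eigenvector[OF A n] by blast
  have "0 < v \<bullet> v" using v real_scalar_prod_self_pos_iff by blast
  then show thesis
    using that[of "(1 / sqrt (v \<bullet> v)) \<cdot>\<^sub>v v" e] v A
    by (auto simp: smult_scalar_prod_distrib[of _ n] scalar_prod_smult_distrib[of _ n]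
        mult_mat_vec smult_smult_assoc mult.commute)
qed

lemma congruence_eigenvector_first_column:
  fixes A W :: "real mat"
  assumes A: "A \<in> carrier_mat (Suc k) (Suc k)" "A\<^sup>T = A" and W: "isometry_mat (Suc k) (Suc k) W"
    and eigen: "A *\<^sub>v col W 0 = e \<cdot>\<^sub>v col W 0"
  defines "M \<equiv> W\<^sup>T * A * W"
  shows "M = four_block_mat (mat 1 1 (\<lambda>_. e)) (0\<^sub>m 1 k) (0\<^sub>m k 1)
    (mat k k (\<lambda>(i, j). M $$ (Suc i, Suc j)))"
proof -
  let ?n = "Suc k"
  have W_carrier: "W \<in> carrier_mat ?n ?n" using W by (simp add: isometry_mat_def)
  have col: "col W i \<in> carrier_vec ?n" if "i < ?n" for i using col_carrier_vec[OF that W_carrier] .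
  have M_sym: "M $$ (i, j) = M $$ (j, i)" if "i < ?n" "j < ?n" for i j
    using arg_cong[OF symmetric_congruence[OF A W_carrier], of "\<lambda>M. M $$ (j, i)"] that W_carrier A
    by (simp add: M_def)
  have M_col0: "M $$ (i, 0) = (if i = 0 then e else 0)" if "i < ?n" for i
  proof -
    have "M $$ (i, 0) = col W i \<bullet> (e \<cdot>\<^sub>v col W 0)"
      unfolding M_def congruence_mat_index[OF W_carrier A(1) that zero_less_Suc] eigen ..
    also have "\<dots> = e * (W\<^sup>T * W) $$ (i, 0)"
      using scalar_prod_smult_distrib[OF col[OF that] col[of 0]] W_carrier that by simp
    finally show ?thesis using W that by (simp add: isometry_mat_def)
  qed
  show ?thesis
  proof (rule eq_matI)
    fix i j assume "i < dim_row (four_block_mat (mat 1 1 (\<lambda>_. e)) (0\<^sub>m 1 k) (0\<^sub>m k 1)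
        (mat k k (\<lambda>(i, j). M $$ (Suc i, Suc j))))"
      "j < dim_col (four_block_mat (mat 1 1 (\<lambda>_. e)) (0\<^sub>m 1 k) (0\<^sub>m k 1)
        (mat k k (\<lambda>(i, j). M $$ (Suc i, Suc j))))"
    then have ij: "i < ?n" "j < ?n" by auto
    then show "M $$ (i, j) = four_block_mat (mat 1 1 (\<lambda>_. e)) (0\<^sub>m 1 k) (0\<^sub>m k 1)
        (mat k k (\<lambda>(i, j). M $$ (Suc i, Suc j))) $$ (i, j)"
      using M_col0[OF ij(1)] M_col0[OF ij(2)] M_sym[OF ij] by (cases i; cases j) auto
  qed (use W_carrier A in \<open>auto simp: M_def\<close>)
qed

lemma isometry_mat_four_block_one:
  assumes "isometry_mat k k U"
  shows "isometry_mat (Suc k) (Suc k) (four_block_mat (1\<^sub>m 1) (0\<^sub>m 1 k) (0\<^sub>m k 1) U)"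
proof -
  let ?Y = "four_block_mat (1\<^sub>m 1) (0\<^sub>m 1 k) (0\<^sub>m k 1) U"
  have U: "U \<in> carrier_mat k k" "U\<^sup>T * U = 1\<^sub>m k" using assms by (auto simp: isometry_mat_def)
  have "?Y\<^sup>T * ?Y = ?Y\<^sup>T * four_block_mat (1\<^sub>m 1) (0\<^sub>m 1 k) (0\<^sub>m k 1) (1\<^sub>m k) * ?Y"
    using U by (simp add: right_mult_one_mat[of _ "Suc k" "Suc k"])
  also have "\<dots> = 1\<^sub>m (Suc k)"
    using four_block_diag_congruence[of "1\<^sub>m 1" "1\<^sub>m k" k U] U
    by (simp add: right_mult_one_mat[of "U\<^sup>T" k k])
  finally show ?thesis
    using four_block_carrier_mat[OF one_carrier_mat[of 1] U(1), of "0\<^sub>m 1 k" "0\<^sub>m k 1"]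
    by (simp add: isometry_mat_def)
qed

lemma real_symmetric_mat_diagonalization:
  fixes A :: "real mat"
  assumes "A \<in> carrier_mat n n" "A\<^sup>T = A"
  shows "\<exists>U d. isometry_mat n n U \<and> U\<^sup>T * A * U = mat_diag n d"
  using assms
proof (induction n arbitrary: A)
  case 0
  then show ?case
    by (intro exI[of _ "1\<^sub>m 0"] exI[of _ "\<lambda>_. 0"]) (auto simp: isometry_mat_def intro: eq_matI)
next
  case (Suc k A)
  have A: "A \<in> carrier_mat (Suc k) (Suc k)" using Suc.prems by simp
  obtain e v where v: "v \<in> carrier_vec (Suc k)" "v \<bullet> v = 1" "A *\<^sub>v v = e \<cdot>\<^sub>v v"
    using real_symmetric_mat_unit_eigenvector[OF Suc.prems] by blast
  obtain W where W: "isometry_mat (Suc k) (Suc k) W" "col W 0 = v"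
    using unit_vec_orthonormal_completion[OF v(1,2)] by blast
  have W_carrier: "W \<in> carrier_mat (Suc k) (Suc k)" using W(1) by (simp add: isometry_mat_def)
  define A3 where "A3 = mat k k (\<lambda>(i, j). (W\<^sup>T * A * W) $$ (Suc i, Suc j))"
  define E where "E = mat 1 1 (\<lambda>_. e)"
  have block: "W\<^sup>T * A * W = four_block_mat E (0\<^sub>m 1 k) (0\<^sub>m k 1) A3"
    using congruence_eigenvector_first_column[OF Suc.prems W(1)] v(3) by (simp add: W(2) A3_def E_def)
  have "(W\<^sup>T * A * W) $$ (j, i) = (W\<^sup>T * A * W) $$ (i, j)" if "i < Suc k" "j < Suc k" for i j
    using arg_cong[OF symmetric_congruence[OF Suc.prems W_carrier], of "\<lambda>M. M $$ (i, j)"]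
      that W_carrier A by simp
  then have A3: "A3 \<in> carrier_mat k k" "A3\<^sup>T = A3" by (auto simp: A3_def intro: eq_matI)
  obtain U3 d3 where U3: "isometry_mat k k U3" "U3\<^sup>T * A3 * U3 = mat_diag k d3"
    using Suc.IH[OF A3] by blast
  define Y where "Y = four_block_mat (1\<^sub>m 1) (0\<^sub>m 1 k) (0\<^sub>m k 1) U3"
  have Y: "isometry_mat (Suc k) (Suc k) Y" unfolding Y_def by (rule isometry_mat_four_block_one[OF U3(1)])
  define d where "d i = (if i = 0 then e else d3 (i - 1))" for i
  have "(W * Y)\<^sup>T * A * (W * Y) = Y\<^sup>T * (W\<^sup>T * A * W) * Y"
    using congruence_mult[OF A W_carrier, of Y "Suc k"] Y by (simp add: isometry_mat_def)
  also have "\<dots> = four_block_mat E (0\<^sub>m 1 k) (0\<^sub>m k 1) (mat_diag k d3)"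
    using four_block_diag_congruence[of E A3 k U3] A3 U3 by (simp add: block Y_def E_def isometry_mat_def)
  also have "\<dots> = mat_diag (Suc k) d" by (rule eq_matI) (auto simp: E_def d_def mat_diag_def)
  finally show ?case using isometry_mat_mult[OF W(1) Y] by blast
qed

definition sorted_eigenvalues :: "real mat \<Rightarrow> real list" where
  "sorted_eigenvalues A = rev (sorted_list_of_multiset (proots (char_poly A)))"

lemma sorted_eigenvalues_antimono:
  assumes "i \<le> j" "j < length (sorted_eigenvalues A)"
  shows "sorted_eigenvalues A ! j \<le> sorted_eigenvalues A ! i"
proof -
  let ?xs = "sorted_list_of_multiset (proots (char_poly A))"
  have "?xs ! (length ?xs - Suc j) \<le> ?xs ! (length ?xs - Suc i)"
    using assms by (intro sorted_nth_mono) (auto simp: sorted_eigenvalues_def)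
  then show ?thesis using assms by (simp add: sorted_eigenvalues_def rev_nth)
qed

lemma proots_prod_linear_factors: "proots (\<Prod>a\<leftarrow>as. [:- a, 1:]) = mset (as :: real list)"
proof -
  have "0 \<notin> set (map (\<lambda>a. [:- a, 1:]) as)" by auto
  from proots_prod_list[OF this]
  have "proots (\<Prod>a\<leftarrow>as. [:- a, 1:]) = sum_list (map proots (map (\<lambda>a. [:- a, 1:]) as))" by simp
  also have "\<dots> = (\<Sum>a\<leftarrow>as. {#a#})" by (simp add: o_def)
  finally show ?thesis by (simp add: sum_list_singleton_mset)
qed

lemma char_poly_mat_diag: "char_poly (mat_diag n d) = (\<Prod>a\<leftarrow>map d [0..<n]. [:- a, 1:])"
  by (subst char_poly_upper_triangular[of _ n])
    (auto simp: upper_triangular_def mat_diag_def diag_mat_def intro!: arg_cong[where f = prod_list])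

lemma char_poly_orthogonal_congruence:
  fixes A U :: "real mat"
  assumes A: "A \<in> carrier_mat n n" and U: "isometry_mat n n U"
  shows "char_poly (U\<^sup>T * A * U) = char_poly A"
proof -
  have U_carrier: "U \<in> carrier_mat n n" and UUt: "U * U\<^sup>T = 1\<^sub>m n"
    using U isometry_mat_square_right_inverse by (auto simp: isometry_mat_def)
  have "U * (U\<^sup>T * A * U) * U\<^sup>T = (U * U\<^sup>T)\<^sup>T * A * (U * U\<^sup>T)"
    using congruence_mult[OF A U_carrier, of "U\<^sup>T" n] U_carrier by simp
  also have "\<dots> = A" using UUt A by simp
  finally have "similar_mat A (U\<^sup>T * A * U)"
    unfolding similar_mat_def similar_mat_wit_def Let_def using U UUt A
    by (intro exI[of _ U] exI[of _ "U\<^sup>T"]) (auto simp: isometry_mat_def)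
  then show ?thesis by (simp add: char_poly_similar)
qed

lemma permutation_mat_diag_congruence:
  assumes p: "p permutes {..<n}"
  defines "P \<equiv> signed_selection_mat n n p (\<lambda>_. 1)"
  shows "isometry_mat n n P" "P\<^sup>T * mat_diag n d * P = mat_diag n (\<lambda>i. d (p i))"
proof -
  have p_lt: "p i < n" if "i < n" for i using permutes_in_image[OF p] that by simp
  show "isometry_mat n n P"
    unfolding P_def using permutes_inj_on[OF p] p_lt by (intro isometry_mat_signed_selection) auto
  show "P\<^sup>T * mat_diag n d * P = mat_diag n (\<lambda>i. d (p i))"
  proof (rule eq_matI)
    fix i j assume "i < dim_row (mat_diag n (\<lambda>i. d (p i)))" "j < dim_col (mat_diag n (\<lambda>i. d (p i)))"
    then have ij: "i < n" "j < n" by simp_all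
    then have "(P\<^sup>T * mat_diag n d * P) $$ (i, j) = mat_diag n d $$ (p i, p j)"
      unfolding P_def using p_lt by (subst signed_selection_mat_congruence) auto
    then show "(P\<^sup>T * mat_diag n d * P) $$ (i, j) = mat_diag n (\<lambda>i. d (p i)) $$ (i, j)"
      using ij p_lt permutes_inj[OF p] by (auto simp: mat_diag_def dest: injD)
  qed (simp_all add: P_def)
qed

lemma real_symmetric_mat_sorted_diagonalization:
  fixes A :: "real mat"
  assumes A: "A \<in> carrier_mat n n" "A\<^sup>T = A"
  obtains U where "isometry_mat n n U" "U\<^sup>T * A * U = mat_diag n (\<lambda>i. sorted_eigenvalues A ! i)"
    and "length (sorted_eigenvalues A) = n"
proof -
  obtain U d where U: "isometry_mat n n U" "U\<^sup>T * A * U = mat_diag n d"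
    using real_symmetric_mat_diagonalization[OF A] by blast
  have U_carrier: "U \<in> carrier_mat n n" using U(1) by (simp add: isometry_mat_def)
  have "mset (sorted_eigenvalues A) = mset (map d [0..<n])"
    by (simp only: char_poly_orthogonal_congruence[OF A(1) U(1), symmetric] U(2)
        sorted_eigenvalues_def char_poly_mat_diag proots_prod_linear_factors
        mset_rev mset_sorted_list_of_multiset)
  then obtain p where p: "p permutes {..<n}" "permute_list p (map d [0..<n]) = sorted_eigenvalues A"
    by (metis length_map length_upt minus_nat.diff_0 mset_eq_permutation)
  then have len: "length (sorted_eigenvalues A) = n"
    by (metis length_map length_permute_list length_upt minus_nat.diff_0)
  have "sorted_eigenvalues A ! i = d (p i)" if "i < n" for i
    using p that permutes_in_image[OF p(1)] by (auto simp: permute_list_nth simp flip: p(2))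
  then have "mat_diag n (\<lambda>i. d (p i)) = mat_diag n (\<lambda>i. sorted_eigenvalues A ! i)"
    by (auto simp: mat_diag_def)
  moreover have "(U * signed_selection_mat n n p (\<lambda>_. 1))\<^sup>T * A
      * (U * signed_selection_mat n n p (\<lambda>_. 1))
      = mat_diag n (\<lambda>i. d (p i))"
    using congruence_mult[OF A(1) U_carrier, of _ n] permutation_mat_diag_congruence[OF p(1)]
    by (simp add: U(2))
  ultimately show thesis
    using that isometry_mat_mult[OF U(1) permutation_mat_diag_congruence(1)[OF p(1)]] len by metis
qed

section \<open>Courant-Fischer bounds and interlacing\<close>

lemma mat_kernel_nontrivial:
  fixes B :: "'a :: field mat"
  assumes B: "B \<in> carrier_mat nr nc" and less: "nr < nc"
  obtains v where "v \<in> carrier_vec nc" "v \<noteq> 0\<^sub>v nc" "B *\<^sub>v v = 0\<^sub>v nr"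
proof -
  define C where "C = gauss_jordan_single B"
  note gj = gauss_jordan_single[OF B C_def[symmetric]]
  obtain f where f: "pivot_fun C f nc" using gj(2,3) unfolding row_echelon_form_def by auto
  have "card (snd ` set (pivot_positions C)) \<le> nr"
  proof -
    have "card (snd ` set (pivot_positions C)) \<le> length (pivot_positions C)"
      using card_image_le card_length le_trans by blast
    also have "\<dots> \<le> card {..<nr}"
      unfolding pivot_positions(4)[OF gj(2) f] by (rule card_mono) auto
    finally show ?thesis by simp
  qed
  then have "snd ` set (pivot_positions C) \<noteq> {0..<nc}" using less by auto
  from find_base_vector[OF gj(3,2) this] gj(1) show thesis using that by blast
qed

lemma vec_in_range_with_zero_coordinates:
  fixes G :: "'a :: field mat"
  assumes G: "G \<in> carrier_mat n r" and "i0 + t \<le> n" "t < r"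
  obtains a where "a \<in> carrier_vec r" "a \<noteq> 0\<^sub>v r" "\<And>i. i0 \<le> i \<Longrightarrow> i < i0 + t \<Longrightarrow> (G *\<^sub>v a) $ i = 0"
proof -
  define B where "B = mat t r (\<lambda>(i, j). G $$ (i0 + i, j))"
  obtain a where a: "a \<in> carrier_vec r" "a \<noteq> 0\<^sub>v r" "B *\<^sub>v a = 0\<^sub>v t"
    using mat_kernel_nontrivial[of B t r] assms(3) by (auto simp: B_def)
  have "(G *\<^sub>v a) $ i = 0" if "i0 \<le> i" "i < i0 + t" for i
  proof -
    have "row B (i - i0) = row G i"
      using that G assms(2) by (intro eq_vecI) (auto simp: B_def)
    then have "(G *\<^sub>v a) $ i = (B *\<^sub>v a) $ (i - i0)"
      using that G assms(2) by (simp add: B_def)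
    then show ?thesis using a(3) that by simp
  qed
  then show thesis using that a by blast
qed

lemma quadratic_form_eigencoordinates:
  fixes A U :: "real mat"
  assumes U: "isometry_mat n n U" "U\<^sup>T * A * U = mat_diag n d" and A: "A \<in> carrier_mat n n"
    and x: "x \<in> carrier_vec n"
  shows "x \<bullet> (A *\<^sub>v x) = (\<Sum>i<n. d i * ((U\<^sup>T *\<^sub>v x) $ i)\<^sup>2)"
    and "x \<bullet> x = (\<Sum>i<n. ((U\<^sup>T *\<^sub>v x) $ i)\<^sup>2)"
proof -
  have U_carrier: "U \<in> carrier_mat n n" using U(1) by (simp add: isometry_mat_def)
  have c: "U\<^sup>T *\<^sub>v x \<in> carrier_vec n" using U_carrier x by simp
  have "U *\<^sub>v (U\<^sup>T *\<^sub>v x) = x"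
    using isometry_mat_square_right_inverse[OF U(1)] U_carrier x
    by (simp add: assoc_mult_mat_vec[of U n n "U\<^sup>T" n x, symmetric])
  then show "x \<bullet> (A *\<^sub>v x) = (\<Sum>i<n. d i * ((U\<^sup>T *\<^sub>v x) $ i)\<^sup>2)"
    and "x \<bullet> x = (\<Sum>i<n. ((U\<^sup>T *\<^sub>v x) $ i)\<^sup>2)"
    using quadratic_form_congruence[OF U_carrier A c] isometry_mat_scalar_prod_self[OF U(1) c]
      quadratic_form_mat_diag[OF c] scalar_prod_self_sum[OF c] U(2)
    by metis+
qed

lemma sorted_eigenvalue_ge_of_isometry:
  fixes A F :: "real mat"
  assumes A: "A \<in> carrier_mat n n" "A\<^sup>T = A" and F: "isometry_mat n k F" and k: "1 \<le> k" "k \<le> n"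
    and bound: "\<forall>a\<in>carrier_vec k. c * ((F *\<^sub>v a) \<bullet> (F *\<^sub>v a)) \<le> (F *\<^sub>v a) \<bullet> (A *\<^sub>v (F *\<^sub>v a))"
  shows "c \<le> sorted_eigenvalues A ! (k - 1)"
proof -
  let ?ev = "\<lambda>i. sorted_eigenvalues A ! i"
  obtain U where U: "isometry_mat n n U" "U\<^sup>T * A * U = mat_diag n ?ev"
    "length (sorted_eigenvalues A) = n"
    using real_symmetric_mat_sorted_diagonalization[OF A] by blast
  have F_carrier: "F \<in> carrier_mat n k" and U_carrier: "U \<in> carrier_mat n n"
    using F U(1) by (auto simp: isometry_mat_def)
  \<comment> \<open>F a is orthogonal to the eigenvectors of the k - 1 largest eigenvalues\<close>
  obtain a where a: "a \<in> carrier_vec k" "a \<noteq> 0\<^sub>v k" "\<And>i. i < k - 1 \<Longrightarrow> (U\<^sup>T * F *\<^sub>v a) $ i = 0"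
  proof (rule vec_in_range_with_zero_coordinates[of "U\<^sup>T * F" n k 0 "k - 1"])
    show "U\<^sup>T * F \<in> carrier_mat n k" using F_carrier U_carrier by simp
  qed (use k in auto)
  define x where "x = F *\<^sub>v a"
  have x: "x \<in> carrier_vec n" using F_carrier a(1) by (simp add: x_def)
  have y: "U\<^sup>T *\<^sub>v x = U\<^sup>T * F *\<^sub>v a" using U_carrier F_carrier a(1) by (simp add: x_def)
  have "0 < x \<bullet> x"
    using isometry_mat_scalar_prod_self[OF F a(1)] a real_scalar_prod_self_pos_iff by (simp add: x_def)
  moreover have "x \<bullet> (A *\<^sub>v x) \<le> ?ev (k - 1) * (x \<bullet> x)"
    unfolding quadratic_form_eigencoordinates[OF U(1,2) A(1) x] sum_distrib_left
  proof (rule sum_mono)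
    fix i assume "i \<in> {..<n}"
    then show "?ev i * ((U\<^sup>T *\<^sub>v x) $ i)\<^sup>2 \<le> ?ev (k - 1) * ((U\<^sup>T *\<^sub>v x) $ i)\<^sup>2"
      using a(3)[of i] sorted_eigenvalues_antimono[of "k - 1" i A] U(3)
      by (cases "i < k - 1") (auto simp: y intro: mult_right_mono)
  qed
  moreover have "c * (x \<bullet> x) \<le> x \<bullet> (A *\<^sub>v x)" using bound a(1) by (simp add: x_def)
  ultimately show ?thesis by (meson mult_right_le_imp_le order_trans)
qed

lemma sorted_eigenvalue_le_of_isometry:
  fixes A F :: "real mat"
  assumes A: "A \<in> carrier_mat n n" "A\<^sup>T = A" and F: "isometry_mat n (Suc (n - k)) F"
    and k: "1 \<le> k" "k \<le> n"
    and bound: "\<forall>a\<in>carrier_vec (Suc (n - k)).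
      (F *\<^sub>v a) \<bullet> (A *\<^sub>v (F *\<^sub>v a)) \<le> c * ((F *\<^sub>v a) \<bullet> (F *\<^sub>v a))"
  shows "sorted_eigenvalues A ! (k - 1) \<le> c"
proof -
  let ?ev = "\<lambda>i. sorted_eigenvalues A ! i"
  obtain U where U: "isometry_mat n n U" "U\<^sup>T * A * U = mat_diag n ?ev"
    "length (sorted_eigenvalues A) = n"
    using real_symmetric_mat_sorted_diagonalization[OF A] by blast
  have F_carrier: "F \<in> carrier_mat n (Suc (n - k))" and U_carrier: "U \<in> carrier_mat n n"
    using F U(1) by (auto simp: isometry_mat_def)
  obtain a where a: "a \<in> carrier_vec (Suc (n - k))" "a \<noteq> 0\<^sub>v (Suc (n - k))"
    "\<And>i. k \<le> i \<Longrightarrow> i < n \<Longrightarrow> (U\<^sup>T * F *\<^sub>v a) $ i = 0"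
  proof (rule vec_in_range_with_zero_coordinates[of "U\<^sup>T * F" n "Suc (n - k)" k "n - k"])
    show "U\<^sup>T * F \<in> carrier_mat n (Suc (n - k))" using F_carrier U_carrier by simp
  qed (use k in auto)
  define x where "x = F *\<^sub>v a"
  have x: "x \<in> carrier_vec n" using F_carrier a(1) by (simp add: x_def)
  have y: "U\<^sup>T *\<^sub>v x = U\<^sup>T * F *\<^sub>v a" using U_carrier F_carrier a(1) by (simp add: x_def)
  have "0 < x \<bullet> x"
    using isometry_mat_scalar_prod_self[OF F a(1)] a real_scalar_prod_self_pos_iff by (simp add: x_def)
  moreover have "?ev (k - 1) * (x \<bullet> x) \<le> x \<bullet> (A *\<^sub>v x)"
    unfolding quadratic_form_eigencoordinates[OF U(1,2) A(1) x] sum_distrib_left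
  proof (rule sum_mono)
    fix i assume "i \<in> {..<n}"
    then show "?ev (k - 1) * ((U\<^sup>T *\<^sub>v x) $ i)\<^sup>2 \<le> ?ev i * ((U\<^sup>T *\<^sub>v x) $ i)\<^sup>2"
      using a(3)[of i] sorted_eigenvalues_antimono[of i "k - 1" A] U(3) k
      by (cases "k \<le> i") (auto simp: y intro: mult_right_mono)
  qed
  moreover have "x \<bullet> (A *\<^sub>v x) \<le> c * (x \<bullet> x)" using bound a(1) by (simp add: x_def)
  ultimately show ?thesis by (meson mult_right_le_imp_le order_trans)
qed

lemma eigenvector_block_isometry:
  fixes A U :: "real mat"
  assumes U: "isometry_mat n n U" "U\<^sup>T * A * U = mat_diag n d" and A: "A \<in> carrier_mat n n"
    and r: "i0 + r \<le> n"
  defines "F \<equiv> U * signed_selection_mat n r (\<lambda>j. i0 + j) (\<lambda>_. 1)"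
  shows "isometry_mat n r F" "F\<^sup>T * A * F = mat_diag r (\<lambda>j. d (i0 + j))"
proof -
  let ?S = "signed_selection_mat n r (\<lambda>j. i0 + j) (\<lambda>_. 1)"
  have S: "isometry_mat n r ?S" using r by (intro isometry_mat_signed_selection) (auto simp: inj_on_def)
  then show "isometry_mat n r F" unfolding F_def by (rule isometry_mat_mult[OF U(1)])
  have "F\<^sup>T * A * F = ?S\<^sup>T * mat_diag n d * ?S"
    unfolding F_def using congruence_mult[OF A, of U n ?S r] U by (simp add: isometry_mat_def)
  also have "\<dots> = mat_diag r (\<lambda>j. d (i0 + j))"
  proof (rule eq_matI)
    fix a b assume "a < dim_row (mat_diag r (\<lambda>j. d (i0 + j)))" "b < dim_col (mat_diag r (\<lambda>j. d (i0 + j)))"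
    then show "(?S\<^sup>T * mat_diag n d * ?S) $$ (a, b) = mat_diag r (\<lambda>j. d (i0 + j)) $$ (a, b)"
      using r by (subst signed_selection_mat_congruence) (auto simp: mat_diag_def)
  qed simp_all
  finally show "F\<^sup>T * A * F = mat_diag r (\<lambda>j. d (i0 + j))" .
qed

lemma sorted_eigenvalues_ge_compression:
  fixes A B J :: "real mat"
  assumes A: "A \<in> carrier_mat n n" "A\<^sup>T = A" and B: "B \<in> carrier_mat m m" "B\<^sup>T = B"
    and J: "isometry_mat n m J"
    and lower: "\<forall>y\<in>carrier_vec m. y \<bullet> (B *\<^sub>v y) + c * (y \<bullet> y) \<le> (J *\<^sub>v y) \<bullet> (A *\<^sub>v (J *\<^sub>v y))"
    and i: "1 \<le> i" "i \<le> m" and mn: "m \<le> n"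
  shows "sorted_eigenvalues B ! (i - 1) + c \<le> sorted_eigenvalues A ! (i - 1)"
proof -
  let ?ev = "\<lambda>j. sorted_eigenvalues B ! j"
  obtain U where U: "isometry_mat m m U" "U\<^sup>T * B * U = mat_diag m ?ev"
    "length (sorted_eigenvalues B) = m"
    using real_symmetric_mat_sorted_diagonalization[OF B] by blast
  define F where "F = U * signed_selection_mat m i (\<lambda>j. 0 + j) (\<lambda>_. 1)"
  have F: "isometry_mat m i F" "F\<^sup>T * B * F = mat_diag i (\<lambda>j. ?ev (0 + j))"
    unfolding F_def using eigenvector_block_isometry[OF U(1,2) B(1)] i by auto
  have F_carrier: "F \<in> carrier_mat m i" and J_carrier: "J \<in> carrier_mat n m"
    using F(1) J by (auto simp: isometry_mat_def)
  show ?thesis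
  proof (rule sorted_eigenvalue_ge_of_isometry[OF A isometry_mat_mult[OF J F(1)]])
    show "\<forall>a\<in>carrier_vec i. (?ev (i - 1) + c) * ((J * F *\<^sub>v a) \<bullet> (J * F *\<^sub>v a))
      \<le> (J * F *\<^sub>v a) \<bullet> (A *\<^sub>v (J * F *\<^sub>v a))"
    proof
      fix a :: "real vec" assume a: "a \<in> carrier_vec i"
      define y where "y = F *\<^sub>v a"
      have y: "y \<in> carrier_vec m" using F_carrier a by (simp add: y_def)
      have JFa: "J * F *\<^sub>v a = J *\<^sub>v y" using J_carrier F_carrier a by (simp add: y_def)
      have "?ev (i - 1) * (a \<bullet> a) \<le> a \<bullet> (mat_diag i (\<lambda>j. ?ev (0 + j)) *\<^sub>v a)"
        using sorted_eigenvalues_antimono[of _ "i - 1" B] U(3) i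
        by (intro quadratic_form_mat_diag_lower_bound[OF a]) auto
      also have "\<dots> = y \<bullet> (B *\<^sub>v y)"
        using quadratic_form_congruence[OF F_carrier B(1) a] F(2) by (simp add: y_def)
      finally have "(?ev (i - 1) + c) * (y \<bullet> y) \<le> y \<bullet> (B *\<^sub>v y) + c * (y \<bullet> y)"
        using isometry_mat_scalar_prod_self[OF F(1) a] by (simp add: y_def algebra_simps)
      also have "\<dots> \<le> (J *\<^sub>v y) \<bullet> (A *\<^sub>v (J *\<^sub>v y))" using lower y by blast
      finally show "(?ev (i - 1) + c) * ((J * F *\<^sub>v a) \<bullet> (J * F *\<^sub>v a))
          \<le> (J * F *\<^sub>v a) \<bullet> (A *\<^sub>v (J * F *\<^sub>v a))"
        unfolding JFa isometry_mat_scalar_prod_self[OF J y] .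
    qed
  qed (use i mn in auto)
qed

lemma sorted_eigenvalues_le_compression:
  fixes A B J :: "real mat"
  assumes A: "A \<in> carrier_mat n n" "A\<^sup>T = A" and B: "B \<in> carrier_mat m m" "B\<^sup>T = B"
    and J: "isometry_mat n m J"
    and upper: "\<forall>y\<in>carrier_vec m. (J *\<^sub>v y) \<bullet> (A *\<^sub>v (J *\<^sub>v y)) \<le> y \<bullet> (B *\<^sub>v y) + c * (y \<bullet> y)"
    and i: "1 \<le> i" "i \<le> m" and mn: "m \<le> n"
  shows "sorted_eigenvalues A ! (n - m + i - 1) \<le> sorted_eigenvalues B ! (i - 1) + c"
proof -
  let ?ev = "\<lambda>j. sorted_eigenvalues B ! j"
  obtain U where U: "isometry_mat m m U" "U\<^sup>T * B * U = mat_diag m ?ev"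
    "length (sorted_eigenvalues B) = m"
    using real_symmetric_mat_sorted_diagonalization[OF B] by blast
  define r where "r = Suc (n - (n - m + i))"
  have r: "r = Suc (m - i)" "i - 1 + r = m" using i mn by (auto simp: r_def)
  define F where "F = U * signed_selection_mat m r (\<lambda>j. i - 1 + j) (\<lambda>_. 1)"
  have F: "isometry_mat m r F" "F\<^sup>T * B * F = mat_diag r (\<lambda>j. ?ev (i - 1 + j))"
    unfolding F_def using eigenvector_block_isometry[OF U(1,2) B(1)] r by auto
  have F_carrier: "F \<in> carrier_mat m r" and J_carrier: "J \<in> carrier_mat n m"
    using F(1) J by (auto simp: isometry_mat_def)
  show ?thesis
  proof (rule sorted_eigenvalue_le_of_isometry[OF A isometry_mat_mult[OF J F(1)[unfolded r_def]]])
    show "\<forall>a\<in>carrier_vec (Suc (n - (n - m + i))). (J * F *\<^sub>v a) \<bullet> (A *\<^sub>v (J * F *\<^sub>v a))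
      \<le> (?ev (i - 1) + c) * ((J * F *\<^sub>v a) \<bullet> (J * F *\<^sub>v a))"
    proof
      fix a :: "real vec" assume "a \<in> carrier_vec (Suc (n - (n - m + i)))"
      then have a: "a \<in> carrier_vec r" by (simp add: r_def)
      define y where "y = F *\<^sub>v a"
      have y: "y \<in> carrier_vec m" using F_carrier a by (simp add: y_def)
      have JFa: "J * F *\<^sub>v a = J *\<^sub>v y" using J_carrier F_carrier a by (simp add: y_def)
      have "(J *\<^sub>v y) \<bullet> (A *\<^sub>v (J *\<^sub>v y)) \<le> y \<bullet> (B *\<^sub>v y) + c * (y \<bullet> y)" using upper y by blast
      also have "y \<bullet> (B *\<^sub>v y) = a \<bullet> (mat_diag r (\<lambda>j. ?ev (i - 1 + j)) *\<^sub>v a)"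
        using quadratic_form_congruence[OF F_carrier B(1) a] F(2) by (simp add: y_def)
      also have "\<dots> \<le> ?ev (i - 1) * (a \<bullet> a)"
        using sorted_eigenvalues_antimono[of "i - 1" _ B] U(3) r
        by (intro quadratic_form_mat_diag_upper_bound[OF a]) auto
      finally show "(J * F *\<^sub>v a) \<bullet> (A *\<^sub>v (J * F *\<^sub>v a))
          \<le> (?ev (i - 1) + c) * ((J * F *\<^sub>v a) \<bullet> (J * F *\<^sub>v a))"
        unfolding JFa isometry_mat_scalar_prod_self[OF J y]
          isometry_mat_scalar_prod_self[OF F(1) a, folded y_def]
        by (simp add: algebra_simps)
    qed
  qed (use i mn in auto)
qed

lemma interlacing_of_diagonally_perturbed_compression:
  fixes A B J :: "real mat"
  assumes A: "A \<in> carrier_mat n n" "A\<^sup>T = A" and B: "B \<in> carrier_mat m m" "B\<^sup>T = B"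
    and J: "isometry_mat n m J" and JAJ: "J\<^sup>T * A * J = B + mat_diag m \<kappa>"
    and lower: "\<And>j. j < m \<Longrightarrow> c1 \<le> \<kappa> j" and upper: "\<And>j. j < m \<Longrightarrow> \<kappa> j \<le> c2"
    and i: "1 \<le> i" "i \<le> m" and mn: "m \<le> n"
  shows "sorted_eigenvalues B ! (i - 1) + c1 \<le> sorted_eigenvalues A ! (i - 1)"
    and "sorted_eigenvalues A ! (n - m + i - 1) \<le> sorted_eigenvalues B ! (i - 1) + c2"
proof -
  have J_carrier: "J \<in> carrier_mat n m" using J by (simp add: isometry_mat_def)
  have form: "(J *\<^sub>v y) \<bullet> (A *\<^sub>v (J *\<^sub>v y)) = y \<bullet> (B *\<^sub>v y) + y \<bullet> (mat_diag m \<kappa> *\<^sub>v y)"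
    if y: "y \<in> carrier_vec m" for y
    using quadratic_form_congruence[OF J_carrier A(1) y]
      scalar_prod_add_distrib[OF y mult_mat_vec_carrier[OF B(1) y]
        mult_mat_vec_carrier[OF mat_diag_dim y]]
    by (simp add: JAJ add_mult_distrib_mat_vec[OF B(1) mat_diag_dim y])
  show "sorted_eigenvalues B ! (i - 1) + c1 \<le> sorted_eigenvalues A ! (i - 1)"
    using sorted_eigenvalues_ge_compression[OF A B J _ i mn] form
      quadratic_form_mat_diag_lower_bound[of _ m c1 \<kappa>] lower by fastforce
  show "sorted_eigenvalues A ! (n - m + i - 1) \<le> sorted_eigenvalues B ! (i - 1) + c2"
    using sorted_eigenvalues_le_compression[OF A B J _ i mn] form
      quadratic_form_mat_diag_upper_bound[of _ m \<kappa> c2] upper by fastforce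
qed

section \<open>The Helmholtzian of an induced subgraph\<close>

definition edge_adjacency_sign :: "('a set \<Rightarrow> 'a) \<Rightarrow> 'a set \<Rightarrow> 'a set \<Rightarrow> real" where
  "edge_adjacency_sign ori e f =
    (if head_tail_adj ori e f then -1 else if same_end_adj ori e f then 1 else 0)"

definition incidence_sign :: "('a set \<Rightarrow> 'a) \<Rightarrow> 'a set \<Rightarrow> 'a \<Rightarrow> real" where
  "incidence_sign ori e x = (if ori e = x then 1 else -1)"

definition orientation_sign :: "('a set \<Rightarrow> 'a) \<Rightarrow> ('a set \<Rightarrow> 'a) \<Rightarrow> 'a set \<Rightarrow> real" where
  "orientation_sign ori ori' e = (if ori e = ori' e then 1 else -1)"

lemma helm_entry_off_diagonal:
  "e \<noteq> f \<Longrightarrow> helm_entry E ori e f = (if in_common_tri E e f then 0 else edge_adjacency_sign ori e f)"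
  unfolding helm_entry_def edge_adjacency_sign_def by auto

lemma ehead_doubleton:
  assumes "a \<noteq> b" "ori {a, b} \<in> {a, b}"
  shows "ehead ori {a, b} = (if ori {a, b} = a then b else a)"
  unfolding ehead_def using assms by (auto intro!: the_equality)

(* Off-diagonal entries of B^T B for the signed vertex-edge incidence matrix B. *)
lemma edge_adjacency_sign_shared_vertex:
  assumes "x \<noteq> y" "x \<noteq> z" "y \<noteq> z" "ori {x, y} \<in> {x, y}" "ori {x, z} \<in> {x, z}"
  shows "edge_adjacency_sign ori {x, y} {x, z}
    = incidence_sign ori {x, y} x * incidence_sign ori {x, z} x"
  using assms ehead_doubleton[of x y ori] ehead_doubleton[of x z ori]
  by (auto simp: edge_adjacency_sign_def incidence_sign_def head_tail_adj_def same_end_adj_def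
      etail_def)

lemma ehead_mem: "card e = 2 \<Longrightarrow> ori e \<in> e \<Longrightarrow> ehead ori e \<in> e"
  by (auto simp: card_2_iff ehead_doubleton)

lemma edge_adjacency_sign_disjoint:
  assumes "card e = 2" "card f = 2" "e \<inter> f = {}" "ori e \<in> e" "ori f \<in> f"
  shows "edge_adjacency_sign ori e f = 0"
  using assms ehead_mem[of e ori] ehead_mem[of f ori]
  by (auto simp: edge_adjacency_sign_def head_tail_adj_def same_end_adj_def etail_def)

lemma orientation_sign_incidence:
  assumes "card e = 2" "x \<in> e" "ori e \<in> e" "ori' e \<in> e"
  shows "orientation_sign ori ori' e = incidence_sign ori e x * incidence_sign ori' e x"
  using assms by (auto simp: card_2_iff orientation_sign_def incidence_sign_def)

lemma edge_adjacency_sign_reorient: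
  assumes e: "card e = 2" and f: "card f = 2" and "e \<noteq> f"
    and ori: "ori e \<in> e" "ori f \<in> f" and ori': "ori' e \<in> e" "ori' f \<in> f"
  shows "orientation_sign ori ori' e * orientation_sign ori ori' f * edge_adjacency_sign ori e f
    = edge_adjacency_sign ori' e f"
proof (cases "e \<inter> f = {}")
  case True
  then show ?thesis using edge_adjacency_sign_disjoint[OF e f] ori ori' by simp
next
  case False
  then obtain x where x: "x \<in> e" "x \<in> f" by auto
  obtain y z where yz: "e = {x, y}" "f = {x, z}" "x \<noteq> y" "x \<noteq> z"
    using e f x by (auto simp: card_2_iff doubleton_eq_iff)
  then have "y \<noteq> z" using \<open>e \<noteq> f\<close> by auto
  then show ?thesis
    using edge_adjacency_sign_shared_vertex[of x y z] orientation_sign_incidence[OF e x(1)]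
      orientation_sign_incidence[OF f x(2)] yz ori ori'
    by (simp add: incidence_sign_def)
qed

lemma doubletons_cover_triangle:
  assumes "card e = 2" "card f = 2" "e \<noteq> f" "e \<subseteq> {a, b, c}" "f \<subseteq> {a, b, c}"
  shows "{a, b, c} \<subseteq> e \<union> f"
proof (rule ccontr)
  assume "\<not> ?thesis"
  then obtain v where v: "v \<in> {a, b, c}" "v \<notin> e" "v \<notin> f" by auto
  define S where "S = {a, b, c} - {v}"
  have "card {a, b, c} \<le> 3" by (simp add: card_insert_le_m1)
  then have "card S \<le> 2" using v(1) by (simp add: S_def)
  moreover have "e \<subseteq> S" "f \<subseteq> S" using assms(4,5) v by (auto simp: S_def)
  ultimately have "e = S" "f = S"
    using assms(1,2) card_seteq[of S e] card_seteq[of S f] by (auto simp: S_def)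
  then show False using assms(3) by simp
qed

lemma in_common_triI:
  assumes "e \<noteq> f" "e \<in> E" "f \<in> E" "a \<noteq> b" "b \<noteq> c" "a \<noteq> c" "{a, b} \<in> E" "{b, c} \<in> E" "{a, c} \<in> E"
    "e \<subseteq> {a, b, c}" "f \<subseteq> {a, b, c}"
  shows "in_common_tri E e f"
  using assms unfolding in_common_tri_def by blast

lemma in_common_triE:
  assumes "in_common_tri E e f"
  obtains a b c where "e \<noteq> f" "e \<in> E" "f \<in> E" "a \<noteq> b" "b \<noteq> c" "a \<noteq> c"
    "{a, b} \<in> E" "{b, c} \<in> E" "{a, c} \<in> E" "e \<subseteq> {a, b, c}" "f \<subseteq> {a, b, c}"
  using assms unfolding in_common_tri_def by blast

lemma in_common_tri_induced:
  assumes "simple_graph V E" and e: "e \<in> induced_edges E W" and f: "f \<in> induced_edges E W"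
  shows "in_common_tri (induced_edges E W) e f \<longleftrightarrow> in_common_tri E e f"
proof
  assume "in_common_tri (induced_edges E W) e f"
  moreover have "induced_edges E W \<subseteq> E" by (auto simp: induced_edges_def)
  ultimately show "in_common_tri E e f"
    by (elim in_common_triE) (intro in_common_triI; blast)
next
  assume "in_common_tri E e f"
  then obtain a b c where abc: "a \<noteq> b" "b \<noteq> c" "a \<noteq> c" "{a, b} \<in> E" "{b, c} \<in> E" "{a, c} \<in> E"
    "e \<subseteq> {a, b, c}" "f \<subseteq> {a, b, c}" and "e \<noteq> f"
    by (elim in_common_triE)
  have "card e = 2" "card f = 2" "e \<union> f \<subseteq> W"
    using assms unfolding simple_graph_def induced_edges_def by auto
  then have "{a, b, c} \<subseteq> W"
    using doubletons_cover_triangle[OF _ _ \<open>e \<noteq> f\<close> abc(7,8)] by blast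
  then have "{a, b} \<in> induced_edges E W" "{b, c} \<in> induced_edges E W" "{a, c} \<in> induced_edges E W"
    using abc(4-6) unfolding induced_edges_def by auto
  then show "in_common_tri (induced_edges E W) e f"
    using abc(1-3,7,8) \<open>e \<noteq> f\<close> e f by (intro in_common_triI)
qed

lemma helm_entry_induced:
  assumes G: "simple_graph V E" and ori: "orientation E ori"
    and ori': "orientation (induced_edges E W) ori'"
    and e: "e \<in> induced_edges E W" and f: "f \<in> induced_edges E W"
  shows "orientation_sign ori ori' e * orientation_sign ori ori' f * helm_entry E ori e f
    = helm_entry (induced_edges E W) ori' e f + (if e = f then kappa E (induced_edges E W) e else 0)"
proof (cases "e = f")
  case True
  then show ?thesis by (simp add: helm_entry_def kappa_def orientation_sign_def)
next
  case False
  have "e \<in> E" "f \<in> E" using e f by (auto simp: induced_edges_def)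
  then have "card e = 2" "card f = 2" "ori e \<in> e" "ori f \<in> f" "ori' e \<in> e" "ori' f \<in> f"
    using G ori ori' e f by (auto simp: simple_graph_def orientation_def)
  then show ?thesis
    using False edge_adjacency_sign_reorient[of e f ori ori'] in_common_tri_induced[OF G e f]
    by (simp add: helm_entry_off_diagonal)
qed

lemma in_common_tri_commute:
  assumes "in_common_tri E e f" shows "in_common_tri E f e"
proof -
  obtain a b c where abc: "e \<noteq> f" "e \<in> E" "f \<in> E" "a \<noteq> b" "b \<noteq> c" "a \<noteq> c"
    "{a, b} \<in> E" "{b, c} \<in> E" "{a, c} \<in> E" "e \<subseteq> {a, b, c}" "f \<subseteq> {a, b, c}"
    using assms by (rule in_common_triE)
  show ?thesis by (rule in_common_triI[of f e E a b c]) (use abc in auto)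
qed

lemma helm_entry_sym: "helm_entry E ori e f = helm_entry E ori f e"
  using in_common_tri_commute[of E e f] in_common_tri_commute[of E f e]
  unfolding helm_entry_def head_tail_adj_def same_end_adj_def by auto

lemma set_edge_list: "finite E \<Longrightarrow> set (edge_list E) = E"
  and distinct_edge_list: "finite E \<Longrightarrow> distinct (edge_list E)"
  using someI_ex[OF finite_distinct_list] unfolding edge_list_def by blast+

lemma length_edge_list: "finite E \<Longrightarrow> length (edge_list E) = card E"
  using set_edge_list distinct_edge_list distinct_card by metis

lemma nth_edge_list_mem: "finite E \<Longrightarrow> a < card E \<Longrightarrow> edge_list E ! a \<in> E"
  using set_edge_list length_edge_list nth_mem by metis

lemma edge_list_subset_embedding:
  assumes fin: "finite E" and sub: "E' \<subseteq> E"
  obtains \<sigma> where "inj_on \<sigma> {..<card E'}" "\<And>a. a < card E' \<Longrightarrow> \<sigma> a < card E"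
    "\<And>a. a < card E' \<Longrightarrow> edge_list E ! \<sigma> a = edge_list E' ! a"
proof -
  have fin': "finite E'" using finite_subset[OF sub fin] .
  define \<sigma> where "\<sigma> a = find_first (edge_list E' ! a) (edge_list E)" for a
  have "\<sigma> a < card E \<and> edge_list E ! \<sigma> a = edge_list E' ! a" if "a < card E'" for a
    using nth_edge_list_mem[OF fin' that] sub set_edge_list[OF fin] length_edge_list[OF fin]
      find_first_le nth_find_first
    unfolding \<sigma>_def by (metis subsetD)
  moreover from this have "inj_on \<sigma> {..<card E'}"
    using distinct_edge_list[OF fin'] length_edge_list[OF fin']
    by (intro inj_onI) (metis lessThan_iff nth_eq_iff_index_eq)
  ultimately show thesis using that by blast
qed

lemma helmholtzian_carrier: "finite E \<Longrightarrow> helmholtzian E ori \<in> carrier_mat (card E) (card E)"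
  by (simp add: helmholtzian_def Let_def length_edge_list)

lemma helmholtzian_index:
  "finite E \<Longrightarrow> i < card E \<Longrightarrow> j < card E \<Longrightarrow>
    helmholtzian E ori $$ (i, j) = helm_entry E ori (edge_list E ! i) (edge_list E ! j)"
  by (simp add: helmholtzian_def Let_def length_edge_list)

lemma helmholtzian_symmetric: "(helmholtzian E ori)\<^sup>T = helmholtzian E ori"
  unfolding helmholtzian_def Let_def by (rule eq_matI) (auto simp: helm_entry_sym)

lemma helmholtzian_induced_congruence:
  assumes G: "simple_graph V E" and fin: "finite E"
    and ori: "orientation E ori" and ori': "orientation (induced_edges E W) ori'"
  defines "E' \<equiv> induced_edges E W"
  obtains J where "isometry_mat (card E) (card E') J"
    "J\<^sup>T * helmholtzian E ori * J
      = helmholtzian E' ori' + mat_diag (card E') (\<lambda>a. kappa E E' (edge_list E' ! a))"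
proof -
  have "E' \<subseteq> E" by (auto simp: E'_def induced_edges_def)
  then have fin': "finite E'" using fin by (rule finite_subset)
  obtain \<sigma> where \<sigma>: "inj_on \<sigma> {..<card E'}" "\<And>a. a < card E' \<Longrightarrow> \<sigma> a < card E"
    "\<And>a. a < card E' \<Longrightarrow> edge_list E ! \<sigma> a = edge_list E' ! a"
    using edge_list_subset_embedding[OF fin \<open>E' \<subseteq> E\<close>] by blast
  let ?es' = "edge_list E'"
  have in_E': "?es' ! a \<in> E'" if "a < card E'" for a using nth_edge_list_mem[OF fin' that] .
  define J where
    "J = signed_selection_mat (card E) (card E') \<sigma> (\<lambda>a. orientation_sign ori ori' (?es' ! a))"
  have "isometry_mat (card E) (card E') J"
    unfolding J_def using \<sigma>(1,2)
    by (intro isometry_mat_signed_selection) (auto simp: orientation_sign_def)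
  moreover have "J\<^sup>T * helmholtzian E ori * J
      = helmholtzian E' ori' + mat_diag (card E') (\<lambda>a. kappa E E' (?es' ! a))"
  proof (rule eq_matI)
    fix a b assume "a < dim_row (helmholtzian E' ori' + mat_diag (card E') (\<lambda>a. kappa E E' (?es' ! a)))"
      "b < dim_col (helmholtzian E' ori' + mat_diag (card E') (\<lambda>a. kappa E E' (?es' ! a)))"
    then have ab: "a < card E'" "b < card E'" using helmholtzian_carrier[OF fin'] by auto
    let ?s = "\<lambda>a. orientation_sign ori ori' (?es' ! a)"
    have "(J\<^sup>T * helmholtzian E ori * J) $$ (a, b) = ?s a * ?s b * helmholtzian E ori $$ (\<sigma> a, \<sigma> b)"
      unfolding J_def using \<sigma>(2) ab
      by (intro signed_selection_mat_congruence[OF helmholtzian_carrier[OF fin]]) auto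
    also have "\<dots> = ?s a * ?s b * helm_entry E ori (?es' ! a) (?es' ! b)"
      using helmholtzian_index[OF fin] \<sigma>(2,3) ab by simp
    also have "\<dots> = helm_entry E' ori' (?es' ! a) (?es' ! b)
        + (if ?es' ! a = ?es' ! b then kappa E E' (?es' ! a) else 0)"
      using helm_entry_induced[OF G ori] ori' in_E'[OF ab(1)] in_E'[OF ab(2)] by (simp add: E'_def)
    also have "?es' ! a = ?es' ! b \<longleftrightarrow> a = b"
      using ab distinct_edge_list[OF fin'] length_edge_list[OF fin'] by (simp add: nth_eq_iff_index_eq)
    finally show "(J\<^sup>T * helmholtzian E ori * J) $$ (a, b)
        = (helmholtzian E' ori' + mat_diag (card E') (\<lambda>a. kappa E E' (?es' ! a))) $$ (a, b)"
      using ab helmholtzian_carrier[OF fin'] helmholtzian_index[OF fin'] by (simp add: mat_diag_def)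
  qed (use helmholtzian_carrier[OF fin'] in \<open>auto simp: J_def\<close>)
  ultimately show thesis using that by blast
qed

lemma H_eig_sorted_eigenvalues: "H_eig E ori i = sorted_eigenvalues (helmholtzian E ori) ! (i - 1)"
  by (simp add: H_eig_def sorted_eigenvalues_def)

lemma kappa_min_le: "finite E' \<Longrightarrow> e \<in> E' \<Longrightarrow> kappa_min E E' \<le> kappa E E' e"
  by (simp add: kappa_min_def)

lemma le_kappa_max: "finite E' \<Longrightarrow> e \<in> E' \<Longrightarrow> kappa E E' e \<le> kappa_max E E'"
  by (simp add: kappa_max_def)

theorem theorem4p2:
  fixes V W :: "'a set" and E :: "'a set set" and ori ori' :: "'a set \<Rightarrow> 'a"
  assumes "simple_graph V E"
    and "card E \<ge> 1"
    and "W \<subseteq> V"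
    and "card (induced_edges E W) \<ge> 1"
    and "orientation E ori"
    and "orientation (induced_edges E W) ori'"
  shows "\<forall>i. 1 \<le> i \<and> i \<le> card (induced_edges E W) \<longrightarrow>
     H_eig E ori i \<ge> H_eig (induced_edges E W) ori' i + kappa_min E (induced_edges E W)
   \<and> H_eig (induced_edges E W) ori' i + kappa_max E (induced_edges E W)
       \<ge> H_eig E ori (card E - card (induced_edges E W) + i)"
proof (intro allI impI)
  fix i assume i: "1 \<le> i \<and> i \<le> card (induced_edges E W)"
  define E' where "E' = induced_edges E W"
  have fin: "finite E" using assms(2) card.infinite by force
  have "E' \<subseteq> E" by (auto simp: E'_def induced_edges_def)
  then have fin': "finite E'" and card_le: "card E' \<le> card E"
    using fin by (auto intro: finite_subset card_mono)
  obtain J where J: "isometry_mat (card E) (card E') J"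
    "J\<^sup>T * helmholtzian E ori * J
      = helmholtzian E' ori' + mat_diag (card E') (\<lambda>a. kappa E E' (edge_list E' ! a))"
    using helmholtzian_induced_congruence[OF assms(1) fin assms(5,6)] unfolding E'_def by blast
  note kappa_bounds = kappa_min_le[OF fin' nth_edge_list_mem[OF fin']]
    le_kappa_max[OF fin' nth_edge_list_mem[OF fin']]
  show "H_eig E' ori' i + kappa_min E E' \<le> H_eig E ori i
    \<and> H_eig E ori (card E - card E' + i) \<le> H_eig E' ori' i + kappa_max E E'"
    using interlacing_of_diagonally_perturbed_compression[OF helmholtzian_carrier[OF fin]
        helmholtzian_symmetric helmholtzian_carrier[OF fin'] helmholtzian_symmetric J kappa_bounds
        _ _ card_le]
      i unfolding H_eig_sorted_eigenvalues E'_def by auto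
qed

end
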